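(* Let $A \subseteq \mathbb{C}$ be countable and dense in $\mathbb{C}$. Then there is a transcendental entire function $f$ such that $f^{(s)}(A) \subseteq A$ for all integers $s \geq 0$.
   Context: A transcendental entire function is an entire function $\mathbb{C}\to\mathbb{C}$ that is not a polynomial. $f^{(s)}$ denotes the $s$-th derivative of $f$, with $f^{(0)}=f$. *)

theory Defs
  imports "HOL-Analysis.Analysis" "HOL-Computational_Algebra.Polynomial"
begin

definition entire :: "(complex \<Rightarrow> complex) \<Rightarrow> bool" where
  "entire f \<longleftrightarrow> f holomorphic_on UNIV"

definition transcendental_entire :: "(complex \<Rightarrow> complex) \<Rightarrow> bool" where
  "transcendental_entire f \<longleftrightarrow> entire f \<and> \<not> (\<exists>p :: complex poly. \<forall>z. f z = poly p z)"

end

theory Submission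
  imports Defs
begin

(*
  Enumerate A injectively as a 0, a 1, ... and the derivative-orders/points as the pairs
  (s, j) = prod_decode n.  For the n-th pair take the "node polynomial"
  Q n = (z - a j)^s * \<Prod>{(z - a i)^n | i < n, i \<noteq> j}: its s-th derivative does not vanish
  at a j, while for every earlier pair (s', j') its s'-th derivative vanishes at a j'.
  Hence the data M n m = Q m^(s)(a j) (with (s, j) = prod_decode n) form a lower
  triangular infinite matrix with nonzero diagonal, and the coefficients c of
  f = \<Sum> c m Q m can be chosen one after the other so that every value
  f^(s)(a j) = \<Sum>{c m M n m | m \<le> n} is a nonzero element of A, using density of A,
  while |c n| stays so small that all derived series converge locally uniformly.
*)

definition poly_majorant :: "complex poly \<Rightarrow> real \<Rightarrow> real" where
  "poly_majorant p R = (\<Sum>i\<le>degree p. norm (coeff p i) * R ^ i)"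

lemma poly_majorant_nonneg: "0 \<le> R \<Longrightarrow> 0 \<le> poly_majorant p R"
  by (simp add: poly_majorant_def sum_nonneg)

lemma norm_poly_le_majorant:
  assumes "norm z \<le> R"
  shows "norm (poly p z) \<le> poly_majorant p R"
proof -
  have "norm (poly p z) = norm (\<Sum>i\<le>degree p. coeff p i * z ^ i)"
    by (simp add: poly_altdef)
  also have "\<dots> \<le> (\<Sum>i\<le>degree p. norm (coeff p i * z ^ i))"
    by (rule norm_sum)
  also have "\<dots> \<le> poly_majorant p R"
    unfolding poly_majorant_def
    by (rule sum_mono) (simp add: norm_mult norm_power mult_left_mono power_mono assms)
  finally show ?thesis .
qed

lemma higher_pderiv_order:
  fixes p :: "complex poly"
  assumes "p \<noteq> 0" "t \<le> order a p"
  shows "(pderiv ^^ t) p \<noteq> 0 \<and> order a ((pderiv ^^ t) p) = order a p - t"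
  using assms(2)
proof (induction t)
  case 0
  then show ?case using assms(1) by simp
next
  case (Suc t)
  let ?q = "(pderiv ^^ t) p"
  from Suc have q: "?q \<noteq> 0" "order a ?q = order a p - t" by auto
  with Suc.prems have "order a ?q \<noteq> 0" by simp
  then have root: "poly ?q a = 0" and "degree ?q \<noteq> 0"
    using order_root order_degree[OF q(1), of a] by auto
  then have "pderiv ?q \<noteq> 0" by (simp add: pderiv_eq_0_iff)
  moreover have "order a ?q = Suc (order a (pderiv ?q))"
    by (rule order_pderiv[OF q(1) root])
  ultimately show ?case using q(2) by simp
qed

lemma higher_pderiv_root_below_order:
  fixes p :: "complex poly"
  assumes "p \<noteq> 0" "t < order a p"
  shows "poly ((pderiv ^^ t) p) a = 0"
  using higher_pderiv_order[OF assms(1), of t a] assms(2) order_root[of "(pderiv ^^ t) p" a]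
  by auto

lemma higher_pderiv_at_order_nonzero:
  fixes p :: "complex poly"
  assumes "p \<noteq> 0"
  shows "poly ((pderiv ^^ order a p) p) a \<noteq> 0"
  using higher_pderiv_order[OF assms, of "order a p" a] order_root[of "(pderiv ^^ order a p) p" a]
  by auto

lemma higher_deriv_poly: "(deriv ^^ s) (poly p) = poly ((pderiv ^^ s) p)" for p :: "complex poly"
proof (induction s)
  case 0
  then show ?case by simp
next
  case (Suc s)
  show ?case
    by (simp add: Suc) (rule ext, rule DERIV_imp_deriv, rule poly_DERIV)
qed

text \<open>A polynomial function has a derivative vanishing identically, so a function with no
  vanishing derivative at some point is not polynomial.\<close>

lemma not_polynomial_if_derivatives_nonzero:
  fixes f :: "complex \<Rightarrow> complex"
  assumes "\<And>s. (deriv ^^ s) f z \<noteq> 0"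
  shows "\<not> (\<exists>p :: complex poly. \<forall>z. f z = poly p z)"
proof
  assume "\<exists>p :: complex poly. \<forall>z. f z = poly p z"
  then obtain p :: "complex poly" where "f = poly p" by blast
  have "degree ((pderiv ^^ degree p) p) = 0"
    by (simp add: degree_higher_pderiv)
  then have "(pderiv ^^ Suc (degree p)) p = 0"
    by (simp add: pderiv_eq_0_iff)
  then have "(deriv ^^ Suc (degree p)) f z = 0"
    by (simp only: \<open>f = poly p\<close> higher_deriv_poly) simp
  with assms show False by blast
qed

section \<open>Node polynomials\<close>

definition node_poly :: "(nat \<Rightarrow> complex) \<Rightarrow> nat \<Rightarrow> nat \<Rightarrow> nat \<Rightarrow> complex poly" where
  "node_poly a s j N = [:- a j, 1:] ^ s * (\<Prod>i\<in>{i. i < N \<and> i \<noteq> j}. [:- a i, 1:] ^ N)"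

lemma node_poly_nonzero: "node_poly a s j N \<noteq> 0"
proof -
  have "(\<Prod>i\<in>{i. i < N \<and> i \<noteq> j}. [:- a i, 1:] ^ N) \<noteq> 0"
    by (subst prod_zero_iff) auto
  then show ?thesis by (simp add: node_poly_def)
qed

lemma order_node_poly_centre:
  assumes "inj a"
  shows "order (a j) (node_poly a s j N) = s"
proof -
  let ?R = "\<Prod>i\<in>{i. i < N \<and> i \<noteq> j}. [:- a i, 1:] ^ N"
  have "poly ?R (a j) \<noteq> 0"
    unfolding poly_prod using assms by (subst prod_zero_iff) (auto dest: injD)
  then have "order (a j) ?R = 0" by (rule order_0I)
  moreover have "order (a j) (node_poly a s j N) = order (a j) ([:- a j, 1:] ^ s) + order (a j) ?R"
    unfolding node_poly_def by (rule order_mult) (use node_poly_nonzero in \<open>simp add: node_poly_def\<close>)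
  ultimately show ?thesis by (simp add: order_power_n_n)
qed

lemma order_node_poly_other:
  assumes "i < N" "i \<noteq> j"
  shows "N \<le> order (a i) (node_poly a s j N)"
proof -
  have "[:- a i, 1:] ^ N dvd (\<Prod>i\<in>{i. i < N \<and> i \<noteq> j}. [:- a i, 1:] ^ N)"
    by (rule dvd_prodI) (use assms in auto)
  then have "[:- a i, 1:] ^ N dvd node_poly a s j N"
    unfolding node_poly_def by (rule dvd_mult)
  then show ?thesis
    using dvd_imp_order_le[OF node_poly_nonzero] by (metis order_power_n_n)
qed

lemma prod_encode_mono_fst: "s \<le> s' \<Longrightarrow> prod_encode (s, j) \<le> prod_encode (s', j)"
  by (induction s' rule: dec_induct) (auto simp: prod_encode_def)

lemma node_poly_diagonal:
  assumes "inj a"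
  shows "poly ((pderiv ^^ s) (node_poly a s j N)) (a j) \<noteq> 0"
  using higher_pderiv_at_order_nonzero[OF node_poly_nonzero, of "a j" a s j N]
  by (simp add: order_node_poly_centre[OF assms])

lemma node_poly_earlier_pairs:
  assumes "inj a" and earlier: "prod_encode (s', j') < prod_encode (s, j)"
  shows "poly ((pderiv ^^ s') (node_poly a s j (prod_encode (s, j)))) (a j') = 0"
proof (rule higher_pderiv_root_below_order[OF node_poly_nonzero])
  show "s' < order (a j') (node_poly a s j (prod_encode (s, j)))"
  proof (cases "j' = j")
    case True
    with earlier have "s' < s" using prod_encode_mono_fst[of s s' j] by fastforce
    with True show ?thesis by (simp add: order_node_poly_centre[OF assms(1)])
  next
    case False
    have "s' < prod_encode (s, j)" "j' < prod_encode (s, j)"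
      using le_prod_encode_1[of s' j'] le_prod_encode_2[of j' s'] earlier by linarith+
    then show ?thesis using order_node_poly_other[of j' _ j a s] False by fastforce
  qed
qed

section \<open>Solving a triangular system approximately in a dense set\<close>

fun recursive_seq :: "(nat \<Rightarrow> (nat \<Rightarrow> 'a) \<Rightarrow> 'a) \<Rightarrow> nat \<Rightarrow> 'a" where
  "recursive_seq G n = G n (\<lambda>m. if m < n then recursive_seq G m else undefined)"

lemma dense_nonzero:
  fixes A :: "complex set"
  assumes "closure A = UNIV" "r > 0"
  shows "\<exists>w\<in>A. w \<noteq> 0 \<and> dist w v < r"
proof -
  have "v islimpt A" using limpt_of_closure[of v A] assms(1) by simp
  show ?thesis
  proof (cases "v = 0")
    case True
    then obtain w where "w \<in> A" "w \<noteq> v" "dist w v < r"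
      using \<open>v islimpt A\<close> assms(2) unfolding islimpt_approachable by blast
    then show ?thesis using True by blast
  next
    case False
    then have "min r (norm v) > 0" using assms(2) by simp
    then obtain w where w: "w \<in> A" "dist w v < min r (norm v)"
      using \<open>v islimpt A\<close> unfolding islimpt_approachable by blast
    then have "w \<noteq> 0" by auto
    then show ?thesis using w by auto
  qed
qed

text \<open>Given a lower triangular infinite matrix \<open>M\<close> with nonzero diagonal, a dense set \<open>A\<close>
  and tolerances \<open>\<epsilon>\<close>, there are coefficients with \<open>|c n| \<le> \<epsilon> n\<close> such that every row sum
  \<open>\<Sum>_{m \<le> n} c m M n m\<close> is a nonzero element of \<open>A\<close>: choose \<open>c n\<close> so that the \<open>n\<close>-th row
  sum moves from the value fixed by \<open>c 0, \<dots>, c (n-1)\<close> to a nearby point of \<open>A\<close>.\<close>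

lemma dense_triangular_solution:
  fixes A :: "complex set" and M :: "nat \<Rightarrow> nat \<Rightarrow> complex" and \<epsilon> :: "nat \<Rightarrow> real"
  assumes dense: "closure A = UNIV" and diag: "\<And>n. M n n \<noteq> 0" and pos: "\<And>n. \<epsilon> n > 0"
  shows "\<exists>c. \<forall>n. norm (c n) \<le> \<epsilon> n \<and> (\<Sum>m\<le>n. c m * M n m) \<in> A - {0}"
proof -
  have "\<forall>n v. \<exists>w. w \<in> A \<and> w \<noteq> 0 \<and> dist w v < norm (M n n) * \<epsilon> n"
  proof (intro allI)
    fix n v
    have "norm (M n n) * \<epsilon> n > 0" using diag pos by simp
    then show "\<exists>w. w \<in> A \<and> w \<noteq> 0 \<and> dist w v < norm (M n n) * \<epsilon> n"
      using dense_nonzero[OF dense] by blast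
  qed
  then obtain W where W: "\<And>n v. W n v \<in> A \<and> W n v \<noteq> 0 \<and> dist (W n v) v < norm (M n n) * \<epsilon> n"
    by metis
  define V where "V n d = (\<Sum>m<n. d m * M n m)" for n and d :: "nat \<Rightarrow> complex"
  define c where "c = recursive_seq (\<lambda>n d. (W n (V n d) - V n d) / M n n)"
  have c_eq: "c n = (W n (V n c) - V n c) / M n n" for n
  proof -
    have "V n (\<lambda>m. if m < n then c m else undefined) = V n c"
      unfolding V_def by (intro sum.cong) auto
    then show ?thesis unfolding c_def by simp
  qed
  have "norm (c n) \<le> \<epsilon> n \<and> (\<Sum>m\<le>n. c m * M n m) \<in> A - {0}" for n
  proof
    have "norm (c n) = dist (W n (V n c)) (V n c) / norm (M n n)"
      by (simp add: c_eq norm_divide dist_norm)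
    also have "\<dots> \<le> \<epsilon> n"
      using W[of n "V n c"] diag[of n] by (simp add: divide_le_eq mult.commute)
    finally show "norm (c n) \<le> \<epsilon> n" .
    have "(\<Sum>m\<le>n. c m * M n m) = V n c + c n * M n n"
      by (simp add: V_def lessThan_Suc_atMost[symmetric])
    also have "\<dots> = W n (V n c)"
      using diag[of n] by (simp add: c_eq)
    finally show "(\<Sum>m\<le>n. c m * M n m) \<in> A - {0}" using W by simp
  qed
  then show ?thesis by blast
qed

section \<open>Entire functions given by rapidly convergent series of polynomials\<close>

lemma poly_series_term_bound:
  fixes P :: "nat \<Rightarrow> complex poly" and c :: "nat \<Rightarrow> complex"
  assumes small: "norm (c n) * (\<Sum>t\<le>n. poly_majorant ((pderiv ^^ t) (P n)) (real n)) \<le> (1/2)^n"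
    and "s \<le> n" "norm z \<le> real n"
  shows "norm (c n * poly ((pderiv ^^ s) (P n)) z) \<le> (1/2)^n"
proof -
  have "norm (poly ((pderiv ^^ s) (P n)) z) \<le> poly_majorant ((pderiv ^^ s) (P n)) (real n)"
    using assms(3) by (rule norm_poly_le_majorant)
  also have "\<dots> \<le> (\<Sum>t\<le>n. poly_majorant ((pderiv ^^ t) (P n)) (real n))"
    by (rule member_le_sum) (use assms(2) in \<open>auto intro: poly_majorant_nonneg\<close>)
  finally have "norm (c n * poly ((pderiv ^^ s) (P n)) z)
      \<le> norm (c n) * (\<Sum>t\<le>n. poly_majorant ((pderiv ^^ t) (P n)) (real n))"
    by (simp add: norm_mult mult_left_mono)
  with small show ?thesis by linarith
qed

text \<open>Hence the series may be differentiated termwise (Weierstrass M-test on a disc around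
  \<open>z\<close>): the derivative of the \<open>s\<close>-th derived series is the \<open>(s+1)\<close>-th one.\<close>

lemma poly_series_has_derivative:
  fixes P :: "nat \<Rightarrow> complex poly" and c :: "nat \<Rightarrow> complex"
  assumes small: "\<And>n. norm (c n) * (\<Sum>t\<le>n. poly_majorant ((pderiv ^^ t) (P n)) (real n)) \<le> (1/2)^n"
  defines "F \<equiv> \<lambda>s z. \<Sum>n. c n * poly ((pderiv ^^ s) (P n)) z"
  shows "(F s has_field_derivative F (Suc s) z) (at z)"
proof -
  define T where "T s n z = c n * poly ((pderiv ^^ s) (P n)) z" for s n z
  have dominated: "\<forall>\<^sub>F n in sequentially. \<forall>x\<in>ball 0 r. norm (T s n x) \<le> (1/2)^n" for s r
    unfolding eventually_sequentially T_def
  proof (intro exI allI impI ballI)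
    fix n x assume "max s (nat \<lceil>r\<rceil>) \<le> n" "x \<in> ball (0::complex) r"
    then have "s \<le> n" "norm x \<le> real n" by (auto simp: dist_norm)
    then show "norm (c n * poly ((pderiv ^^ s) (P n)) x) \<le> (1/2)^n"
      by (intro poly_series_term_bound small)
  qed
  have geometric: "summable (\<lambda>n. (1/2::real)^n)"
    by (rule summable_geometric) simp
  let ?B = "ball (0::complex) (norm z + 1)"
  have "((\<lambda>x. \<Sum>n. T s n x) has_field_derivative (\<Sum>n. T (Suc s) n z)) (at z)"
  proof (rule has_field_derivative_series'(2)[of ?B "T s" "T (Suc s)" 0])
    show "(T s n has_field_derivative T (Suc s) n x) (at x within ?B)" for n x
      unfolding T_def by (rule has_field_derivative_at_within) (auto intro!: derivative_eq_intros)
    show "uniformly_convergent_on ?B (\<lambda>n x. \<Sum>i<n. T (Suc s) i x)"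
      by (rule Weierstrass_m_test'_ev[OF dominated geometric])
    show "summable (\<lambda>n. T s n 0)"
      by (rule summable_comparison_test_ev[OF _ geometric])
        (use dominated[where s=s and r=1] in \<open>auto elim!: eventually_mono\<close>)
  qed (auto simp: add_nonneg_pos)
  then show ?thesis unfolding F_def T_def .
qed

lemma entire_poly_series:
  fixes P :: "nat \<Rightarrow> complex poly" and c :: "nat \<Rightarrow> complex"
  assumes small: "\<And>n. norm (c n) * (\<Sum>t\<le>n. poly_majorant ((pderiv ^^ t) (P n)) (real n)) \<le> (1/2)^n"
  defines "F \<equiv> \<lambda>s z. \<Sum>n. c n * poly ((pderiv ^^ s) (P n)) z"
  shows "entire (F 0)" and "(deriv ^^ s) (F 0) = F s"
proof -
  have der: "(F s has_field_derivative F (Suc s) z) (at z)" for s z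
    unfolding F_def by (rule poly_series_has_derivative[OF small])
  then show "entire (F 0)"
    unfolding entire_def holomorphic_on_def field_differentiable_def
    by (blast intro: has_field_derivative_at_within)
  show "(deriv ^^ s) (F 0) = F s"
  proof (induction s)
    case 0
    then show ?case by simp
  next
    case (Suc s)
    then show ?case by simp (rule ext, rule DERIV_imp_deriv, rule der)
  qed
qed

section \<open>Interpolating derivative values by a series of node polynomials\<close>

definition node_poly_seq :: "(nat \<Rightarrow> complex) \<Rightarrow> nat \<Rightarrow> complex poly" where
  "node_poly_seq a n = (case prod_decode n of (s, j) \<Rightarrow> node_poly a s j n)"

text \<open>The row of the pair \<open>(s, j)\<close> is the sequence of
  values \<open>Q m^(s)(a j)\<close>, which is triangular by \<open>node_poly_earlier_pairs\<close>.\<close>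

lemma node_series_interpolation:
  fixes A :: "complex set" and a :: "nat \<Rightarrow> complex"
  assumes dense: "closure A = UNIV" and "inj a"
  defines "Q \<equiv> node_poly_seq a"
  obtains c where
    "\<And>n. norm (c n) * (\<Sum>t\<le>n. poly_majorant ((pderiv ^^ t) (Q n)) (real n)) \<le> (1/2)^n"
    "\<And>s j. (\<Sum>n. c n * poly ((pderiv ^^ s) (Q n)) (a j)) \<in> A - {0}"
proof -
  define M where "M n m = (case prod_decode n of (s, j) \<Rightarrow> poly ((pderiv ^^ s) (Q m)) (a j))"
    for n m
  define \<Sigma> where "\<Sigma> n = (\<Sum>t\<le>n. poly_majorant ((pderiv ^^ t) (Q n)) (real n))" for n
  have \<Sigma>_nonneg: "0 \<le> \<Sigma> n" for n
    unfolding \<Sigma>_def by (intro sum_nonneg poly_majorant_nonneg) auto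
  have M_pair: "M (prod_encode (s, j)) m = poly ((pderiv ^^ s) (Q m)) (a j)" for s j m
    by (simp add: M_def)
  have Q_pair: "Q (prod_encode (s, j)) = node_poly a s j (prod_encode (s, j))" for s j
    by (simp add: Q_def node_poly_seq_def)
  have diag: "M n n \<noteq> 0" for n
    using surj_prod_encode[THEN surjD, of n] node_poly_diagonal[OF \<open>inj a\<close>]
    by (auto simp: M_pair Q_pair)
  have above_diag: "M n m = 0" if "n < m" for n m
    using surj_prod_encode[THEN surjD, of n] surj_prod_encode[THEN surjD, of m]
      node_poly_earlier_pairs[OF \<open>inj a\<close>] that
    by (auto simp: M_pair Q_pair)
  have tolerance_pos: "0 < (1/2)^n / (1 + \<Sigma> n)" for n
    using \<Sigma>_nonneg[of n] by simp
  obtain c where c: "\<And>n. norm (c n) \<le> (1/2)^n / (1 + \<Sigma> n)"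
    "\<And>n. (\<Sum>m\<le>n. c m * M n m) \<in> A - {0}"
    using dense_triangular_solution[of A M "\<lambda>n. (1/2)^n / (1 + \<Sigma> n)", OF dense diag tolerance_pos] by blast
  show thesis
  proof (rule that)
    fix n
    have "norm (c n) * \<Sigma> n \<le> (1/2)^n / (1 + \<Sigma> n) * (1 + \<Sigma> n)"
      using c(1)[of n] \<Sigma>_nonneg[of n] by (intro mult_mono) auto
    then show "norm (c n) * (\<Sum>t\<le>n. poly_majorant ((pderiv ^^ t) (Q n)) (real n)) \<le> (1/2)^n"
      using \<Sigma>_nonneg[of n] by (simp add: \<Sigma>_def)
  next
    fix s j
    let ?n = "prod_encode (s, j)"
    have "(\<lambda>m. c m * M ?n m) sums (\<Sum>m\<le>?n. c m * M ?n m)"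
      by (rule sums_finite) (auto simp: above_diag)
    then show "(\<Sum>m. c m * poly ((pderiv ^^ s) (Q m)) (a j)) \<in> A - {0}"
      using c(2)[of ?n] by (simp add: sums_iff M_pair)
  qed
qed

theorem corollary2:
  fixes A :: "complex set"
  assumes "countable A" and "closure A = UNIV"
  shows "\<exists>f. transcendental_entire f \<and> (\<forall>s::nat. (deriv ^^ s) f ` A \<subseteq> A)"
proof -
  have "infinite A"
  proof
    assume "finite A"
    then have "A = UNIV" using assms(2) finite_imp_closed closure_closed by metis
    with \<open>finite A\<close> show False by (metis infinite_UNIV_char_0)
  qed
  then have "bij_betw (from_nat_into A) UNIV A"
    using bij_betw_from_nat_into assms(1) by blast
  then obtain a :: "nat \<Rightarrow> complex" where "inj a" and A_eq: "A = range a"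
    unfolding bij_betw_def by metis
  obtain c where small: "\<And>n. norm (c n) *
      (\<Sum>t\<le>n. poly_majorant ((pderiv ^^ t) (node_poly_seq a n)) (real n)) \<le> (1/2)^n"
    and node_values: "\<And>s j. (\<Sum>n. c n * poly ((pderiv ^^ s) (node_poly_seq a n)) (a j)) \<in> A - {0}"
    using node_series_interpolation[OF assms(2) \<open>inj a\<close>] by blast
  define F where "F = (\<lambda>s z. \<Sum>n. c n * poly ((pderiv ^^ s) (node_poly_seq a n)) z)"
  have "entire (F 0)" and derivs: "\<And>s. (deriv ^^ s) (F 0) = F s"
    unfolding F_def by (rule entire_poly_series[OF small])+
  moreover have "(deriv ^^ s) (F 0) (a 0) \<noteq> 0" for s
    using node_values[of s 0] unfolding derivs unfolding F_def by simp
  then have "\<not> (\<exists>p :: complex poly. \<forall>z. F 0 z = poly p z)"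
    by (rule not_polynomial_if_derivatives_nonzero)
  moreover have "(deriv ^^ s) (F 0) ` A \<subseteq> A" for s
    using node_values unfolding derivs unfolding F_def A_eq by auto
  ultimately show ?thesis
    unfolding transcendental_entire_def by blast
qed

end
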